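(* For every integer $d\ge 4$, there exist states $|\mu\rangle,|\lambda\rangle,|\bar\mu\rangle,|\bar\lambda\rangle\in\mathbb{C}^d\otimes\mathbb{C}^d$, all of full Schmidt rank $d$, with the following properties: (a) $|\mu\rangle\otimes|\lambda\rangle$ can be transformed into $|\bar\mu\rangle\otimes|\bar\lambda\rangle$ by a local unitary; (b) the transformation is non-trivial: it is not the case that ($|\bar\mu\rangle$ is LU-equivalent to $|\mu\rangle$ and $|\bar\lambda\rangle$ is LU-equivalent to $|\lambda\rangle$), and it is not the case that ($|\bar\mu\rangle$ is LU-equivalent to $|\lambda\rangle$ and $|\bar\lambda\rangle$ is LU-equivalent to $|\mu\rangle$).
   Context: The state $|\mu\rangle\otimes|\lambda\rangle$ is regarded as a bipartite state between two parties, each holding two $d$-dimensional subsystems. A local unitary is $U_A\otimes U_B$ with $U_A,U_B\in\mathrm{U}(d^2)$. Two bipartite states are LU-equivalent if they are related by a local unitary, equivalently if they have the same squared Schmidt coefficients up to reordering. *)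

theory Defs
  imports "HOL-Analysis.Analysis"
begin

text \<open>A bipartite pure state of two parties with local dimensions indexed by the
finite types 'a and 'b is represented by its coefficient matrix:
psi $ i $ j is the amplitude of the basis vector |i>_A |j>_B.\<close>

definition adj_mat :: "complex^'n^'m \<Rightarrow> complex^'m^'n" where
  "adj_mat U = (\<chi> i j. cnj (U $ j $ i))"

definition unitary_mat :: "complex^'n^'n \<Rightarrow> bool" where
  "unitary_mat U \<longleftrightarrow> U ** adj_mat U = mat 1 \<and> adj_mat U ** U = mat 1"

definition is_state :: "complex^'b^'a \<Rightarrow> bool" where
  "is_state psi \<longleftrightarrow> (\<Sum>i\<in>UNIV. \<Sum>j\<in>UNIV. (cmod (psi $ i $ j))\<^sup>2) = 1"

definition schmidt_rank :: "complex^'b^'a \<Rightarrow> nat" where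
  "schmidt_rank psi = rank psi"

text \<open>Action of the local unitary U_A \<otimes> U_B on a bipartite state:
the coefficient matrix C becomes U_A C U_B^T.\<close>
definition lu_apply :: "complex^'a^'a \<Rightarrow> complex^'b^'b \<Rightarrow> complex^'b^'a \<Rightarrow> complex^'b^'a" where
  "lu_apply UA UB psi = UA ** psi ** transpose UB"

definition LU_equiv :: "complex^'b^'a \<Rightarrow> complex^'b^'a \<Rightarrow> bool" where
  "LU_equiv phi psi \<longleftrightarrow>
     (\<exists>UA UB. unitary_mat UA \<and> unitary_mat UB \<and> psi = lu_apply UA UB phi)"

text \<open>The tensor product |mu> \<otimes> |lambda> of two bipartite states, regarded as a
bipartite state between A = (A1,A2) and B = (B1,B2): the amplitude of
|i1 i2>_A |j1 j2>_B is mu_{i1 j1} * lambda_{i2 j2}.\<close>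
definition tensor_state :: "complex^'n^'n \<Rightarrow> complex^'n^'n \<Rightarrow> complex^('n \<times> 'n)^('n \<times> 'n)" where
  "tensor_state mu lam = (\<chi> i j. mu $ fst i $ fst j * lam $ snd i $ snd j)"

end

(* Take states in Schmidt form whose squared Schmidt coefficients are proportional to 4^k,
   k running through a multiset E of d exponents.  The tensor product of two such states is
   again of this form, with the sumset E1 + E2 as exponent multiset, and two such states with
   equal exponent multisets differ by a permutation of the basis, a local unitary.  Sumsets
   multiply generating polynomials.  For E_mu = {0, ..., d-1} and E_mub = {0, 1, 1, 2, ..., d-2}
   both P_mu (1 - x + x^2) and P_mub (1 - x + x^2) have 0/1 coefficients, hence are the
   generating polynomials P_lamb and P_lam of exponent sets, and P_mu P_lam = P_mub P_lamb.
   Local unitaries preserve the set of squared Schmidt coefficients, and that set separates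
   mu from mub and from lamb. *)

theory Submission
  imports Defs "HOL-Computational_Algebra.Polynomial" "HOL-Library.Multiset"
begin

lemma ex_fun_image_mset_UNIV:
  assumes "size M = CARD('a::finite)"
  shows "\<exists>f::'a \<Rightarrow> 'b. image_mset f (mset_set UNIV) = M"
proof -
  obtain xs where xs: "mset xs = M" using ex_mset by blast
  obtain h :: "'a \<Rightarrow> nat" where h: "bij_betw h UNIV {..<CARD('a)}"
    using ex_bij_betw_finite_nat[of "UNIV::'a set"] by (auto simp: lessThan_atLeast0)
  have "image_mset (\<lambda>i. xs ! h i) (mset_set UNIV) =
      image_mset (nth xs) (image_mset h (mset_set UNIV))"
    by (simp add: multiset.map_comp comp_def)
  also have "image_mset h (mset_set UNIV) = mset_set {..<length xs}"
    using h assms by (simp add: bij_betw_def image_mset_mset_set flip: xs)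
  also have "image_mset (nth xs) (mset_set {..<length xs}) = M"
    by (metis xs map_nth mset_map mset_upt lessThan_atLeast0)
  finally show ?thesis by blast
qed

lemma image_mset_mset_set_eq_imp_bij_betw:
  assumes "finite S" "finite T" "image_mset f (mset_set S) = image_mset g (mset_set T)"
  shows "\<exists>\<sigma>. bij_betw \<sigma> S T \<and> (\<forall>x\<in>S. g (\<sigma> x) = f x)"
  using assms
proof (induction S arbitrary: T rule: finite_induct)
  case empty
  then show ?case by (auto simp: mset_set_empty_iff bij_betw_def)
next
  case (insert a S)
  then have "f a \<in># image_mset g (mset_set T)"
    by (metis image_mset_add_mset mset_set.insert union_single_eq_member)
  then obtain b where b: "b \<in> T" "g b = f a" using insert.prems by auto
  have "add_mset (f a) (image_mset f (mset_set S)) =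
      add_mset (g b) (image_mset g (mset_set (T - {b})))"
    using insert b by (simp add: mset_set.remove)
  then obtain \<sigma> where \<sigma>: "bij_betw \<sigma> S (T - {b})" "\<forall>x\<in>S. g (\<sigma> x) = f x"
    using insert b by (metis add_mset_remove_trivial finite_Diff)
  have "bij_betw (\<sigma>(a := b)) S (T - {b})"
    using \<sigma>(1) insert.hyps by (metis bij_betw_cong fun_upd_other)
  then have "bij_betw (\<sigma>(a := b)) (S \<union> {a}) ((T - {b}) \<union> {b})"
    using notIn_Un_bij_betw[of a S "\<sigma>(a := b)" "T - {b}"] insert.hyps by simp
  moreover have "(T - {b}) \<union> {b} = T" using b by auto
  ultimately have "bij_betw (\<sigma>(a := b)) (insert a S) T" by simp
  moreover have "\<forall>x\<in>insert a S. g ((\<sigma>(a := b)) x) = f x"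
    using \<sigma>(2) b insert.hyps by auto
  ultimately show ?case by blast
qed

section \<open>Generating polynomials of exponent multisets\<close>

definition gen_poly :: "nat multiset \<Rightarrow> int poly" where
  "gen_poly M = (\<Sum>k\<in>#M. monom 1 k)"

lemma coeff_gen_poly: "coeff (gen_poly M) k = int (count M k)"
  by (induction M) (auto simp: gen_poly_def)

lemma gen_poly_add [simp]: "gen_poly (M + N) = gen_poly M + gen_poly N"
  by (simp add: gen_poly_def)

lemma gen_poly_add_mset [simp]: "gen_poly (add_mset k M) = [:0, 1:] ^ k + gen_poly M"
  by (simp add: gen_poly_def monom_altdef)

lemma gen_poly_inject: "gen_poly M = gen_poly N \<longleftrightarrow> M = N"
  by (metis coeff_gen_poly multiset_eqI of_nat_eq_iff)

lemma gen_poly_image_mset_set: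
  "finite S \<Longrightarrow> gen_poly (image_mset e (mset_set S)) = (\<Sum>i\<in>S. monom 1 (e i))"
  by (simp add: gen_poly_def sum_unfold_sum_mset multiset.map_comp comp_def)

lemma gen_poly_mset_set: "finite S \<Longrightarrow> gen_poly (mset_set S) = (\<Sum>k\<in>S. [:0, 1:] ^ k)"
  using gen_poly_image_mset_set[of S id] by (simp add: monom_altdef)

lemma gen_poly_image_mset_add:
  fixes e1 :: "'a::finite \<Rightarrow> nat" and e2 :: "'b::finite \<Rightarrow> nat"
  shows "gen_poly (image_mset (\<lambda>p. e1 (fst p) + e2 (snd p)) (mset_set UNIV)) =
    gen_poly (image_mset e1 (mset_set UNIV)) * gen_poly (image_mset e2 (mset_set UNIV))"
  by (simp add: gen_poly_image_mset_set sum_product sum.cartesian_product mult_monom split_beta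
      flip: UNIV_Times_UNIV)

lemma power_sum_mult_cyclo6:
  fixes x :: "'a::comm_ring_1"
  assumes "2 \<le> n"
  shows "(\<Sum>k<n. x ^ k) * (1 - x + x^2) = 1 + (\<Sum>k\<in>{2..<n}. x ^ k) + x ^ (n + 1)"
  using assms
proof (induction n rule: nat_induct_at_least)
  case base
  then show ?case by (simp add: algebra_simps numeral_eq_Suc)
next
  case (Suc n)
  then show ?case by (simp add: algebra_simps power2_eq_square)
qed

lemma power_sum_plus_mult_cyclo6:
  fixes x :: "'a::comm_ring_1"
  assumes "3 \<le> n"
  shows "(x + (\<Sum>k<n. x ^ k)) * (1 - x + x^2) =
    1 + x + x^3 + (\<Sum>k\<in>{3..<n}. x ^ k) + x ^ (n + 1)"
proof -
  have "{2..<n} = insert 2 {3..<n}" using assms by auto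
  then show ?thesis
    using power_sum_mult_cyclo6[of n x] assms
    by (simp add: algebra_simps power2_eq_square power3_eq_cube)
qed

definition exps_mu :: "nat \<Rightarrow> nat multiset" where
  "exps_mu d = mset_set {..<d}"

definition exps_lam :: "nat \<Rightarrow> nat multiset" where
  "exps_lam d = {#0, 1, 3, d#} + mset_set {3..<d - 1}"

definition exps_mub :: "nat \<Rightarrow> nat multiset" where
  "exps_mub d = add_mset 1 (mset_set {..<d - 1})"

definition exps_lamb :: "nat \<Rightarrow> nat multiset" where
  "exps_lamb d = {#0, d + 1#} + mset_set {2..<d}"

lemma size_exps:
  assumes "4 \<le> d"
  shows "size (exps_mu d) = d" "size (exps_lam d) = d"
    and "size (exps_mub d) = d" "size (exps_lamb d) = d"
  using assms by (simp_all add: exps_mu_def exps_lam_def exps_mub_def exps_lamb_def)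

lemma zero_in_exps:
  assumes "4 \<le> d"
  shows "0 \<in># exps_mu d" "0 \<in># exps_mub d" "0 \<in># exps_lamb d"
  using assms by (simp_all add: exps_mu_def exps_mub_def exps_lamb_def)

lemma set_mset_exps_ne:
  assumes "4 \<le> d"
  shows "set_mset (exps_mub d) \<noteq> set_mset (exps_mu d)"
    and "set_mset (exps_lamb d) \<noteq> set_mset (exps_mu d)"
proof -
  have "d - 1 \<in># exps_mu d" "d - 1 \<notin># exps_mub d" "1 \<in># exps_mu d" "1 \<notin># exps_lamb d"
    using assms by (auto simp: exps_mu_def exps_mub_def exps_lamb_def)
  then show "set_mset (exps_mub d) \<noteq> set_mset (exps_mu d)"
    and "set_mset (exps_lamb d) \<noteq> set_mset (exps_mu d)"
    by metis+
qed

lemma gen_poly_exps_product: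
  assumes "4 \<le> d"
  shows "gen_poly (exps_mu d) * gen_poly (exps_lam d) =
    gen_poly (exps_mub d) * gen_poly (exps_lamb d)"
proof -
  let ?G = "1 - [:0, 1:] + [:0, 1:] ^ 2 :: int poly"
  have "gen_poly (exps_lamb d) = gen_poly (exps_mu d) * ?G"
    using power_sum_mult_cyclo6[of d "[:0, 1:] :: int poly"] assms
    by (simp add: exps_mu_def exps_lamb_def gen_poly_mset_set algebra_simps)
  moreover have "gen_poly (exps_lam d) = gen_poly (exps_mub d) * ?G"
    using power_sum_plus_mult_cyclo6[of "d - 1" "[:0, 1:] :: int poly"] assms
    by (simp add: exps_lam_def exps_mub_def gen_poly_mset_set algebra_simps)
  ultimately show ?thesis by (simp add: ac_simps)
qed

definition diag_mat :: "('a::finite \<Rightarrow> complex) \<Rightarrow> complex^'a^'a" where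
  "diag_mat a = (\<chi> i j. if i = j then a i else 0)"

definition perm_mat :: "('a::finite \<Rightarrow> 'a) \<Rightarrow> complex^'a^'a" where
  "perm_mat \<sigma> = (\<chi> i j. if i = \<sigma> j then 1 else 0)"

lemma diag_mat_nth [simp]: "diag_mat a $ i $ j = (if i = j then a i else 0)"
  by (simp add: diag_mat_def)

lemma perm_mat_nth [simp]: "perm_mat \<sigma> $ i $ j = (if i = \<sigma> j then 1 else 0)"
  by (simp add: perm_mat_def)

lemma transpose_nth [simp]: "transpose A $ i $ j = A $ j $ i"
  by (simp add: transpose_def)

lemma adj_mat_nth [simp]: "adj_mat A $ i $ j = cnj (A $ j $ i)"
  by (simp add: adj_mat_def)

lemma adj_mat_mult: "adj_mat (A ** B) = adj_mat B ** adj_mat (A :: complex^'n^'m)"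
  by (simp add: adj_mat_def matrix_matrix_mult_def vec_eq_iff mult.commute)

lemma adj_mat_adj_mat [simp]: "adj_mat (adj_mat A) = A"
  by (simp add: vec_eq_iff)

lemma unitary_adj_mat: "unitary_mat U \<Longrightarrow> unitary_mat (adj_mat U)"
  by (simp add: unitary_mat_def)

lemma unitary_transpose:
  assumes "unitary_mat U"
  shows "unitary_mat (transpose U)"
proof -
  have adj: "adj_mat (transpose U) = transpose (adj_mat U)"
    by (simp add: vec_eq_iff)
  show ?thesis
    using assms by (simp add: unitary_mat_def adj flip: matrix_transpose_mul)
qed

lemma diag_mat_mult_nth [simp]: "(diag_mat m ** A) $ i $ j = m i * A $ i $ j"
  by (simp add: matrix_matrix_mult_def if_distrib[of "\<lambda>x. x * _"] cong: if_cong)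

lemma mult_diag_mat_nth [simp]: "(A ** diag_mat m) $ i $ j = A $ i $ j * m j"
  by (simp add: matrix_matrix_mult_def if_distrib cong: if_cong)

lemma mult_perm_mat_nth: "(A ** perm_mat \<sigma>) $ i $ j = A $ i $ \<sigma> j"
  by (simp add: matrix_matrix_mult_def if_distrib cong: if_cong)

lemma perm_mat_mult_nth:
  assumes "bij \<sigma>"
  shows "(perm_mat \<sigma> ** A) $ i $ j = A $ inv \<sigma> i $ j"
proof -
  have "\<And>k. i = \<sigma> k \<longleftrightarrow> k = inv \<sigma> i" using assms by (metis bij_inv_eq_iff)
  then show ?thesis
    by (simp add: matrix_matrix_mult_def if_distrib[of "\<lambda>x. x * _"] cong: if_cong)
qed

lemma mult_transpose_perm_mat_nth:
  assumes "bij \<sigma>"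
  shows "(A ** transpose (perm_mat \<sigma>)) $ i $ j = A $ i $ inv \<sigma> j"
proof -
  have "A ** transpose (perm_mat \<sigma>) = transpose (perm_mat \<sigma> ** transpose A)"
    by (simp add: matrix_transpose_mul)
  then show ?thesis by (simp add: perm_mat_mult_nth[OF assms])
qed

lemma unitary_perm_mat:
  assumes "bij \<sigma>"
  shows "unitary_mat (perm_mat \<sigma>)"
proof -
  have adj: "adj_mat (perm_mat \<sigma>) = transpose (perm_mat \<sigma>)"
    by (simp add: vec_eq_iff)
  have "perm_mat \<sigma> ** transpose (perm_mat \<sigma>) = mat 1"
    using assms
    by (auto simp: vec_eq_iff mat_def mult_transpose_perm_mat_nth bij_is_surj surj_f_inv_f)
  moreover have "transpose (perm_mat \<sigma>) ** perm_mat \<sigma> = mat 1"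
    using assms by (auto simp: vec_eq_iff mat_def mult_perm_mat_nth bij_is_inj inj_eq)
  ultimately show ?thesis by (simp add: unitary_mat_def adj)
qed

lemma lu_apply_perm_mat_diag_mat:
  assumes "bij \<sigma>"
  shows "lu_apply (perm_mat \<sigma>) (perm_mat \<sigma>) (diag_mat (w \<circ> \<sigma>)) = diag_mat w"
  using assms
  by (auto simp: vec_eq_iff lu_apply_def mult_transpose_perm_mat_nth perm_mat_mult_nth
      bij_is_surj surj_f_inv_f bij_inv_eq_iff)

lemma tensor_state_diag_mat:
  "tensor_state (diag_mat a) (diag_mat b) = diag_mat (\<lambda>p. a (fst p) * b (snd p))"
  by (auto simp: tensor_state_def vec_eq_iff prod_eq_iff)

lemma is_state_diag_mat: "is_state (diag_mat a) \<longleftrightarrow> (\<Sum>i\<in>UNIV. (cmod (a i))\<^sup>2) = 1"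
  by (simp add: is_state_def if_distrib[of "\<lambda>x. (cmod x)\<^sup>2"] cong: if_cong)

lemma schmidt_rank_diag_mat:
  fixes a :: "'a::finite \<Rightarrow> complex"
  assumes "\<And>i. a i \<noteq> 0"
  shows "schmidt_rank (diag_mat a) = CARD('a)"
proof -
  have "cart_basis \<subseteq> vec.span (rows (diag_mat a))"
  proof
    fix v :: "complex^'a" assume "v \<in> cart_basis"
    then obtain i where v: "v = axis i 1" by (auto simp: cart_basis_def)
    have "v = (1 / a i) *s row i (diag_mat a)"
      using assms[of i] by (auto simp: v vec_eq_iff row_def axis_def)
    moreover have "row i (diag_mat a) \<in> rows (diag_mat a)" by (auto simp: rows_def)
    ultimately show "v \<in> vec.span (rows (diag_mat a))"
      by (metis vec.span_base vec.span_scale)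
  qed
  then have "vec.span (rows (diag_mat a)) = UNIV"
    by (metis top.extremum_uniqueI span_cart_basis vec.span_mono vec.span_span)
  then have "vec.dim (rows (diag_mat a)) = vec.dim (UNIV :: (complex^'a) set)"
    by (metis vec.dim_span)
  then show ?thesis by (simp add: schmidt_rank_def row_rank_def_gen card_cart_basis)
qed

section \<open>Local unitary invariance of the Schmidt coefficients\<close>

lemma lu_apply_mult_adj_mat:
  assumes "unitary_mat UB"
  shows "lu_apply UA UB psi ** adj_mat (lu_apply UA UB psi) =
    UA ** (psi ** adj_mat psi) ** adj_mat UA"
proof -
  have "lu_apply UA UB psi ** adj_mat (lu_apply UA UB psi)
      = UA ** psi ** (transpose UB ** adj_mat (transpose UB)) ** adj_mat psi ** adj_mat UA"
    by (simp add: lu_apply_def adj_mat_mult matrix_mul_assoc)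
  also have "\<dots> = UA ** (psi ** adj_mat psi) ** adj_mat UA"
    using unitary_transpose[OF assms] by (simp add: unitary_mat_def matrix_mul_assoc)
  finally show ?thesis .
qed

lemma diag_mat_mult_adj_mat:
  "diag_mat a ** adj_mat (diag_mat a) = diag_mat (\<lambda>i. of_real ((cmod (a i))\<^sup>2))"
  by (auto simp: vec_eq_iff complex_norm_square simp del: of_real_power)

lemma range_subset_if_unitary_intertwines:
  assumes U: "unitary_mat U" and intertwine: "diag_mat m' ** U = U ** diag_mat m"
  shows "range m \<subseteq> range m'"
proof
  fix c assume "c \<in> range m"
  then obtain i where c: "c = m i" by auto
  have "(adj_mat U ** U) $ i $ i = 1" using U by (simp add: unitary_mat_def mat_def)
  then obtain k where k: "U $ k $ i \<noteq> 0" by (force simp: matrix_matrix_mult_def)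
  have "m' k * U $ k $ i = U $ k $ i * m i"
    using arg_cong[OF intertwine, of "\<lambda>A. A $ k $ i"] by simp
  then have "c = m' k" using k c by simp
  then show "c \<in> range m'" by simp
qed

lemma LU_equiv_diag_mat_imp_range_eq:
  assumes "LU_equiv (diag_mat a) (diag_mat b)"
  shows "range (\<lambda>i. (cmod (a i))\<^sup>2) = range (\<lambda>i. (cmod (b i))\<^sup>2)"
proof -
  obtain UA UB where U: "unitary_mat UA" "unitary_mat UB"
    and b: "diag_mat b = lu_apply UA UB (diag_mat a)"
    using assms by (auto simp: LU_equiv_def)
  define ma where "ma = (\<lambda>i. complex_of_real ((cmod (a i))\<^sup>2))"
  define mb where "mb = (\<lambda>i. complex_of_real ((cmod (b i))\<^sup>2))"
  have conj: "diag_mat mb = UA ** diag_mat ma ** adj_mat UA"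
    using lu_apply_mult_adj_mat[OF U(2), of UA "diag_mat a"]
    unfolding b[symmetric] diag_mat_mult_adj_mat ma_def mb_def .
  have "diag_mat mb ** UA = UA ** diag_mat ma"
    using U(1) by (simp add: conj unitary_mat_def flip: matrix_mul_assoc)
  moreover have "diag_mat ma ** adj_mat UA = adj_mat UA ** diag_mat mb"
    using U(1) by (simp add: conj matrix_mul_assoc unitary_mat_def)
  ultimately have "range ma = range mb"
    using range_subset_if_unitary_intertwines U(1) unitary_adj_mat[OF U(1)] by blast
  then have "of_real ` range (\<lambda>i. (cmod (a i))\<^sup>2) =
      (of_real ` range (\<lambda>i. (cmod (b i))\<^sup>2) :: complex set)"
    by (simp add: ma_def mb_def image_image)
  then show ?thesis by (simp add: inj_image_eq_iff inj_of_real)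
qed

section \<open>States with Schmidt coefficients proportional to powers of two\<close>

definition exp_weight :: "('a::finite \<Rightarrow> nat) \<Rightarrow> real" where
  "exp_weight e = (\<Sum>i\<in>UNIV. 4 ^ e i)"

definition exp_coeff :: "('a::finite \<Rightarrow> nat) \<Rightarrow> 'a \<Rightarrow> real" where
  "exp_coeff e i = 2 ^ e i / sqrt (exp_weight e)"

definition exp_state :: "('a::finite \<Rightarrow> nat) \<Rightarrow> complex^'a^'a" where
  "exp_state e = diag_mat (\<lambda>i. of_real (exp_coeff e i))"

lemma exp_weight_pos: "exp_weight e > 0"
  unfolding exp_weight_def by (intro sum_pos) auto

lemma exp_weight_add:
  fixes e1 :: "'a::finite \<Rightarrow> nat" and e2 :: "'b::finite \<Rightarrow> nat"
  shows "exp_weight (\<lambda>p. e1 (fst p) + e2 (snd p)) = exp_weight e1 * exp_weight e2"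
  by (simp add: exp_weight_def sum_product sum.cartesian_product power_add split_beta
      flip: UNIV_Times_UNIV)

lemma exp_coeff_pos: "exp_coeff e i > 0"
  using exp_weight_pos[of e] by (simp add: exp_coeff_def)

lemma exp_coeff_sq: "(exp_coeff e i)\<^sup>2 = 4 ^ e i / exp_weight e"
  using exp_weight_pos[of e]
  by (simp add: exp_coeff_def power_divide power2_eq_square flip: power_mult_distrib)

lemma is_state_exp_state: "is_state (exp_state e)"
  using exp_weight_pos[of e]
  by (simp add: exp_state_def is_state_diag_mat exp_coeff_sq
      flip: sum_divide_distrib exp_weight_def)

lemma schmidt_rank_exp_state: "schmidt_rank (exp_state (e :: 'a::finite \<Rightarrow> nat)) = CARD('a)"
  unfolding exp_state_def
  by (rule schmidt_rank_diag_mat) (metis exp_coeff_pos of_real_eq_0_iff less_irrefl)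

lemma tensor_state_exp_state:
  "tensor_state (exp_state e1) (exp_state e2) = exp_state (\<lambda>p. e1 (fst p) + e2 (snd p))"
  by (simp add: exp_state_def exp_coeff_def tensor_state_diag_mat exp_weight_add
      real_sqrt_mult power_add)

lemma LU_equiv_exp_state_if_image_mset_eq:
  fixes e e' :: "'a::finite \<Rightarrow> nat"
  assumes "image_mset e (mset_set UNIV) = image_mset e' (mset_set UNIV)"
  shows "LU_equiv (exp_state e) (exp_state e')"
proof -
  obtain \<sigma> where \<sigma>: "bij \<sigma>" "\<And>i. e' (\<sigma> i) = e i"
    using image_mset_mset_set_eq_imp_bij_betw[OF finite_class.finite_UNIV finite_class.finite_UNIV assms]
    by auto
  have "exp_weight e' = exp_weight e"
    using sum.reindex_bij_betw[OF \<sigma>(1), of "\<lambda>i. (4::real) ^ e' i"]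
    by (simp add: exp_weight_def \<sigma>(2))
  then have "(\<lambda>i. of_real (exp_coeff e i)) = (\<lambda>i. complex_of_real (exp_coeff e' i)) \<circ> \<sigma>"
    by (simp add: exp_coeff_def comp_def \<sigma>(2))
  then have "exp_state e = diag_mat ((\<lambda>i. complex_of_real (exp_coeff e' i)) \<circ> \<sigma>)"
    unfolding exp_state_def by (rule arg_cong)
  then have "lu_apply (perm_mat \<sigma>) (perm_mat \<sigma>) (exp_state e) = exp_state e'"
    by (simp only: lu_apply_perm_mat_diag_mat[OF \<sigma>(1)] exp_state_def)
  then show ?thesis
    using unitary_perm_mat[OF \<sigma>(1)] unfolding LU_equiv_def by metis
qed

lemma range_eq_if_LU_equiv_exp_state:
  fixes e e' :: "'a::finite \<Rightarrow> nat"
  assumes "LU_equiv (exp_state e) (exp_state e')" "0 \<in> range e" "0 \<in> range e'"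
  shows "range e = range e'"
proof -
  define R where "R f = range (\<lambda>i. 4 ^ f i / exp_weight f :: real)" for f :: "'a \<Rightarrow> nat"
  have R: "R e = R e'"
    using LU_equiv_diag_mat_imp_range_eq[OF assms(1)[unfolded exp_state_def]]
    by (simp add: R_def exp_coeff_sq)
  have Min: "Min (R f) = 1 / exp_weight f" if "0 \<in> range f" for f
  proof (rule Min_eqI)
    show "finite (R f)" by (simp add: R_def)
    show "1 / exp_weight f \<le> r" if "r \<in> R f" for r
      using that exp_weight_pos[of f] by (auto simp: R_def divide_right_mono)
    obtain i where "f i = 0" using \<open>0 \<in> range f\<close> by auto
    then have "1 / exp_weight f = 4 ^ f i / exp_weight f" by simp
    then show "1 / exp_weight f \<in> R f" unfolding R_def by (rule range_eqI)
  qed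
  have "exp_weight e = exp_weight e'"
    using Min[OF assms(2)] Min[OF assms(3)] R by simp
  moreover have "range f = {k. 4 ^ k / exp_weight f \<in> R f}" for f
    using exp_weight_pos[of f] by (auto simp: R_def power_inject_exp)
  ultimately show ?thesis
    using R by metis
qed

theorem mainTheorem10:
  assumes "CARD('n::finite) \<ge> 4"
  shows "\<exists>mu lam mub lamb :: complex^'n^'n.
    is_state mu \<and> is_state lam \<and> is_state mub \<and> is_state lamb \<and>
    schmidt_rank mu = CARD('n) \<and> schmidt_rank lam = CARD('n) \<and>
    schmidt_rank mub = CARD('n) \<and> schmidt_rank lamb = CARD('n) \<and>
    LU_equiv (tensor_state mu lam) (tensor_state mub lamb) \<and>
    \<not> (LU_equiv mu mub \<and> LU_equiv lam lamb) \<and>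
    \<not> (LU_equiv lam mub \<and> LU_equiv mu lamb)"
proof -
  let ?d = "CARD('n)"
  obtain e_mu e_lam e_mub e_lamb :: "'n \<Rightarrow> nat" where
    mu: "image_mset e_mu (mset_set UNIV) = exps_mu ?d" and
    lam: "image_mset e_lam (mset_set UNIV) = exps_lam ?d" and
    mub: "image_mset e_mub (mset_set UNIV) = exps_mub ?d" and
    lamb: "image_mset e_lamb (mset_set UNIV) = exps_lamb ?d"
    using ex_fun_image_mset_UNIV size_exps[OF assms] by metis
  have "gen_poly (image_mset (\<lambda>p. e_mu (fst p) + e_lam (snd p)) (mset_set UNIV)) =
        gen_poly (image_mset (\<lambda>p. e_mub (fst p) + e_lamb (snd p)) (mset_set UNIV))"
    by (simp add: gen_poly_image_mset_add mu lam mub lamb gen_poly_exps_product[OF assms])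
  then have "LU_equiv (tensor_state (exp_state e_mu) (exp_state e_lam))
                      (tensor_state (exp_state e_mub) (exp_state e_lamb))"
    by (simp add: gen_poly_inject tensor_state_exp_state LU_equiv_exp_state_if_image_mset_eq)
  moreover have "range e_mu = set_mset (exps_mu ?d)" "range e_mub = set_mset (exps_mub ?d)"
      "range e_lamb = set_mset (exps_lamb ?d)"
    by (simp_all flip: mu mub lamb)
  then have "\<not> LU_equiv (exp_state e_mu) (exp_state e_mub)"
      "\<not> LU_equiv (exp_state e_mu) (exp_state e_lamb)"
    using zero_in_exps[OF assms] set_mset_exps_ne[OF assms]
    by (auto dest: range_eq_if_LU_equiv_exp_state)
  ultimately show ?thesis
    by (intro exI[of _ "exp_state e_mu"] exI[of _ "exp_state e_lam"] exI[of _ "exp_state e_mub"]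
        exI[of _ "exp_state e_lamb"]) (simp add: is_state_exp_state schmidt_rank_exp_state)
qed

end
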